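(* Let $S$ be a homogroup with $\mathrm{Ker}(S)=\mathrm{Red}(S)$. Then every direct power $\Pi S=\prod_{i\in I}\mathrm{Pr}(S)$ is $\mathcal{L}_{s\text{-}pred}(\Pi S)$-equationally Noetherian.
   Context: A semigroup $S$ is a homogroup if it has a kernel $\mathrm{Ker}(S)$ (minimal two-sided ideal) which is a group. $\mathrm{Red}(S)=\{ab\mid a,b\in S\}$ is the set of reducible elements. $\mathcal{L}_{s\text{-}pred}=\{M\}$ with $M$ ternary; $\mathrm{Pr}(S)$ is the structure on $S$ with $M(x,y,z)\Leftrightarrow xy=z$. The direct power consists of sequences $[a_i\mid i\in I]$ with $M$ holding coordinatewise; $\mathcal{L}_{s\text{-}pred}(\Pi S)$ adds a constant symbol for every element of the power. Equations are atomic formulas ($M(t_1,t_2,t_3)$ or $t_1=t_2$, each $t_k$ a variable or constant); systems are sets of equations in a fixed finite set of variables; the structure is equationally Noetherian in this language if every system is equivalent (same solution set) to a finite subsystem. *)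

theory Defs
  imports "HOL-Algebra.Group"
begin

section \<open>Semigroup notions (S is the whole type 'a of class semigroup_mult)\<close>

definition two_sided_ideal :: "'a::semigroup_mult set \<Rightarrow> bool" where
  "two_sided_ideal J \<longleftrightarrow> J \<noteq> {} \<and> (\<forall>s j. j \<in> J \<longrightarrow> s * j \<in> J \<and> j * s \<in> J)"

definition is_kernel :: "'a::semigroup_mult set \<Rightarrow> bool" where
  "is_kernel K \<longleftrightarrow> two_sided_ideal K \<and> (\<forall>J. two_sided_ideal J \<longrightarrow> J \<subseteq> K \<longrightarrow> J = K)"

definition is_subgroup_of_sg :: "'a::semigroup_mult set \<Rightarrow> bool" where
  "is_subgroup_of_sg K \<longleftrightarrow> (\<exists>e. group \<lparr>carrier = K, monoid.mult = (*), one = e\<rparr>)"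

definition Red :: "'a::semigroup_mult set" where
  "Red = {a * b | a b. True}"

section \<open>Equations in the language {M} with constants for all elements\<close>

datatype 'c sterm = SVar nat | SConst 'c

datatype 'c sequation = EqM "'c sterm" "'c sterm" "'c sterm" | EqE "'c sterm" "'c sterm"

fun tvars :: "'c sterm \<Rightarrow> nat set" where
  "tvars (SVar n) = {n}"
| "tvars (SConst c) = {}"

fun evars :: "'c sequation \<Rightarrow> nat set" where
  "evars (EqM t1 t2 t3) = tvars t1 \<union> tvars t2 \<union> tvars t3"
| "evars (EqE t1 t2) = tvars t1 \<union> tvars t2"

fun teval :: "(nat \<Rightarrow> 'c) \<Rightarrow> 'c sterm \<Rightarrow> 'c" where
  "teval \<sigma> (SVar n) = \<sigma> n"
| "teval \<sigma> (SConst c) = c"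

fun esat :: "('c \<Rightarrow> 'c \<Rightarrow> 'c \<Rightarrow> bool) \<Rightarrow> (nat \<Rightarrow> 'c) \<Rightarrow> 'c sequation \<Rightarrow> bool" where
  "esat M \<sigma> (EqM t1 t2 t3) = M (teval \<sigma> t1) (teval \<sigma> t2) (teval \<sigma> t3)"
| "esat M \<sigma> (EqE t1 t2) = (teval \<sigma> t1 = teval \<sigma> t2)"

definition solutions :: "('c \<Rightarrow> 'c \<Rightarrow> 'c \<Rightarrow> bool) \<Rightarrow> 'c sequation set \<Rightarrow> (nat \<Rightarrow> 'c) set" where
  "solutions M Ss = {\<sigma>. \<forall>e\<in>Ss. esat M \<sigma> e}"

definition eqn_noetherian :: "('c \<Rightarrow> 'c \<Rightarrow> 'c \<Rightarrow> bool) \<Rightarrow> bool" where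
  "eqn_noetherian M \<longleftrightarrow>
     (\<forall>V Ss. finite V \<longrightarrow> (\<forall>e\<in>Ss. evars e \<subseteq> V) \<longrightarrow>
        (\<exists>S0 \<subseteq> Ss. finite S0 \<and> solutions M S0 = solutions M Ss))"

text \<open>Pr(S): M(x,y,z) iff xy = z.  Direct power indexed by type 'i: coordinatewise.\<close>
definition power_M :: "('i \<Rightarrow> 'a::semigroup_mult) \<Rightarrow> ('i \<Rightarrow> 'a) \<Rightarrow> ('i \<Rightarrow> 'a) \<Rightarrow> bool" where
  "power_M x y z \<longleftrightarrow> (\<forall>i. x i * y i = z i)"

end

theory Submission
  imports Defs
begin

text \<open>If the reducible elements form a group with identity \<open>e\<close>, then \<open>x y = (e x)(e y)\<close>, so a
  product depends only on the images of its factors in that group; hence \<open>x y = x z\<close> forces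
  \<open>w y = w z\<close> for every \<open>w\<close>, and symmetrically on the right.  Now evaluate two equations of the
  same shape (same variables at the same places, constants possibly different) under two
  assignments \<open>\<sigma>\<close>, \<open>\<tau>\<close>: at a variable place both equations see the same value, at a constant place
  both assignments do.  The cancellation laws show that if \<open>\<sigma>\<close> solves both equations and \<open>\<tau>\<close> solves
  the first, then \<open>\<tau>\<close> solves the second, coordinatewise in every direct power.  So either some
  two equations of the system of the same shape already have no common solution, or all equations
  of the same shape are equivalent; as a finite set of variables admits only finitely many shapes,
  a finite subsystem suffices in both cases.\<close>

lemma mult_eq_Red_identity_mult:
  fixes x y :: "'a::semigroup_mult"
  assumes "group \<lparr>carrier = Red, monoid.mult = (*), one = e\<rparr>"
  shows "x * y = (e * x) * (e * y)"
proof -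
  interpret G: group "\<lparr>carrier = Red, monoid.mult = (*), one = e\<rparr>" by fact
  have Red: "a * b \<in> Red" for a b :: 'a
    unfolding Red_def by blast
  have central: "e * s = s * e" for s :: 'a
  proof -
    have "e * s = (e * s) * e" using G.r_one[of "e * s"] Red by simp
    also have "\<dots> = e * (s * e)" by (simp add: mult.assoc)
    also have "\<dots> = s * e" using G.l_one[of "s * e"] Red by simp
    finally show ?thesis .
  qed
  have "(e * x) * (e * y) = e * (x * e) * y" by (simp add: mult.assoc)
  also have "\<dots> = e * (e * x) * y" by (simp only: central)
  also have "\<dots> = (e * e) * (x * y)" by (simp add: mult.assoc)
  also have "\<dots> = x * y" using G.l_one[of "x * y"] Red by (simp add: mult.assoc)
  finally show ?thesis by simp
qed

lemma mult_left_eq_imp_all: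
  fixes x y z w :: "'a::semigroup_mult"
  assumes "is_subgroup_of_sg (Red :: 'a set)" and "x * y = x * z"
  shows "w * y = w * z"
proof -
  obtain e where G: "group \<lparr>carrier = (Red :: 'a set), monoid.mult = (*), one = e\<rparr>"
    using assms(1) unfolding is_subgroup_of_sg_def by blast
  interpret G: group "\<lparr>carrier = (Red :: 'a set), monoid.mult = (*), one = e\<rparr>" by (fact G)
  have Red: "a * b \<in> Red" for a b :: 'a
    unfolding Red_def by blast
  have "(e * x) * (e * y) = (e * x) * (e * z)"
    using assms(2) mult_eq_Red_identity_mult[OF G] by metis
  then have "e * y = e * z"
    using G.Units_l_cancel[of "e * x" "e * y" "e * z"] Red by (simp add: G.Units_eq)
  then show ?thesis
    using mult_eq_Red_identity_mult[OF G] by metis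
qed

lemma mult_right_eq_imp_all:
  fixes x y z w :: "'a::semigroup_mult"
  assumes "is_subgroup_of_sg (Red :: 'a set)" and "y * x = z * x"
  shows "y * w = z * w"
proof -
  obtain e where G: "group \<lparr>carrier = (Red :: 'a set), monoid.mult = (*), one = e\<rparr>"
    using assms(1) unfolding is_subgroup_of_sg_def by blast
  interpret G: group "\<lparr>carrier = (Red :: 'a set), monoid.mult = (*), one = e\<rparr>" by (fact G)
  have Red: "a * b \<in> Red" for a b :: 'a
    unfolding Red_def by blast
  have "(e * y) * (e * x) = (e * z) * (e * x)"
    using assms(2) mult_eq_Red_identity_mult[OF G] by metis
  then have "e * y = e * z"
    using G.right_cancel[of "e * x" "e * y" "e * z"] Red by simp
  then show ?thesis
    using mult_eq_Red_identity_mult[OF G] by metis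
qed

text \<open>Read \<open>a b / c d\<close> as the values at one place of two equations of the same shape (columns)
  under two assignments (rows): a variable place gives equal columns, a constant place equal rows.\<close>

definition degenerate_square :: "'c \<Rightarrow> 'c \<Rightarrow> 'c \<Rightarrow> 'c \<Rightarrow> bool" where
  "degenerate_square a b c d \<longleftrightarrow> (a = b \<and> c = d) \<or> (a = c \<and> b = d)"

definition square_complete :: "('c \<Rightarrow> 'c \<Rightarrow> 'c \<Rightarrow> bool) \<Rightarrow> bool" where
  "square_complete M \<longleftrightarrow>
     (\<forall>a1 a2 a3 b1 b2 b3 c1 c2 c3 d1 d2 d3.
        degenerate_square a1 b1 c1 d1 \<longrightarrow> degenerate_square a2 b2 c2 d2 \<longrightarrow>
        degenerate_square a3 b3 c3 d3 \<longrightarrow>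
        M a1 a2 a3 \<longrightarrow> M b1 b2 b3 \<longrightarrow> M c1 c2 c3 \<longrightarrow> M d1 d2 d3)"

lemma square_completeD:
  assumes "square_complete M"
    and "degenerate_square a1 b1 c1 d1" "degenerate_square a2 b2 c2 d2" "degenerate_square a3 b3 c3 d3"
    and "M a1 a2 a3" "M b1 b2 b3" "M c1 c2 c3"
  shows "M d1 d2 d3"
  using assms unfolding square_complete_def by blast

lemma square_complete_mult:
  assumes "is_subgroup_of_sg (Red :: 'a::semigroup_mult set)"
  shows "square_complete (\<lambda>x y z :: 'a. x * y = z)"
  unfolding square_complete_def degenerate_square_def
proof (intro allI impI, elim disjE conjE)
qed (use mult_left_eq_imp_all[OF assms] mult_right_eq_imp_all[OF assms] in metis)+

lemma square_complete_pointwise: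
  assumes "square_complete M"
  shows "square_complete (\<lambda>x y z. \<forall>i. M (x i) (y i) (z i))"
  unfolding square_complete_def
proof (intro allI impI)
  fix a1 a2 a3 b1 b2 b3 c1 c2 c3 d1 d2 d3 :: "'i \<Rightarrow> 'a" and i
  have pointwise: "degenerate_square (a i) (b i) (c i) (d i)" if "degenerate_square a b c d"
    for a b c d :: "'i \<Rightarrow> 'a"
    using that unfolding degenerate_square_def by auto
  assume "degenerate_square a1 b1 c1 d1" "degenerate_square a2 b2 c2 d2"
    "degenerate_square a3 b3 c3 d3" "\<forall>i. M (a1 i) (a2 i) (a3 i)"
    "\<forall>i. M (b1 i) (b2 i) (b3 i)" "\<forall>i. M (c1 i) (c2 i) (c3 i)"
  then show "M (d1 i) (d2 i) (d3 i)"
    by (blast intro: square_completeD[OF assms] pointwise)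
qed

definition shape :: "'c sequation \<Rightarrow> unit sequation" where
  "shape = map_sequation (\<lambda>_. ())"

lemma evars_shape [simp]: "evars (shape e) = evars e"
proof -
  have "tvars (map_sterm f t) = tvars t" for f and t :: "'c sterm"
    by (cases t) auto
  then show ?thesis
    unfolding shape_def by (cases e) auto
qed

lemma finite_shapes:
  assumes "finite V"
  shows "finite {p :: unit sequation. evars p \<subseteq> V}"
proof -
  define T where "T = insert (SConst ()) (SVar ` V)"
  have T: "t \<in> T" if "tvars t \<subseteq> V" for t :: "unit sterm"
    using that unfolding T_def by (cases t) auto
  have "{p. evars p \<subseteq> V} \<subseteq> (\<lambda>(a, b, c). EqM a b c) ` (T \<times> T \<times> T) \<union> (\<lambda>(a, b). EqE a b) ` (T \<times> T)"
  proof
    fix p :: "unit sequation"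
    assume "p \<in> {p. evars p \<subseteq> V}"
    then show "p \<in> (\<lambda>(a, b, c). EqM a b c) ` (T \<times> T \<times> T) \<union> (\<lambda>(a, b). EqE a b) ` (T \<times> T)"
    proof (cases p)
      case (EqM a b c)
      then show ?thesis
        using \<open>p \<in> {p. evars p \<subseteq> V}\<close> by (auto intro!: image_eqI[where x = "(a, b, c)"] T)
    next
      case (EqE a b)
      then show ?thesis
        using \<open>p \<in> {p. evars p \<subseteq> V}\<close> by (auto intro!: image_eqI[where x = "(a, b)"] T)
    qed
  qed
  moreover have "finite T"
    using assms unfolding T_def by simp
  ultimately show ?thesis
    by (meson finite_SigmaI finite_Un finite_imageI finite_subset)
qed

lemma degenerate_square_teval:
  assumes "map_sterm (\<lambda>_. ()) t = map_sterm (\<lambda>_. ()) u"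
  shows "degenerate_square (teval \<sigma> t) (teval \<sigma> u) (teval \<tau> t) (teval \<tau> u)"
  using assms unfolding degenerate_square_def by (cases t; cases u) auto

lemma esat_same_shape:
  assumes "square_complete M" and "shape E1 = shape E2"
    and "esat M \<sigma> E1" and "esat M \<sigma> E2" and "esat M \<tau> E1"
  shows "esat M \<tau> E2"
proof (cases E1)
  case (EqM t1 t2 t3)
  with assms(2) obtain u1 u2 u3 where E2: "E2 = EqM u1 u2 u3"
    unfolding shape_def by (cases E2) auto
  with EqM assms(2) have "map_sterm (\<lambda>_. ()) t1 = map_sterm (\<lambda>_. ()) u1"
    "map_sterm (\<lambda>_. ()) t2 = map_sterm (\<lambda>_. ()) u2" "map_sterm (\<lambda>_. ()) t3 = map_sterm (\<lambda>_. ()) u3"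
    unfolding shape_def by auto
  then show ?thesis
    using assms(3-5) EqM E2 by (auto intro: square_completeD[OF assms(1)] degenerate_square_teval)
next
  case (EqE t1 t2)
  with assms(2) obtain u1 u2 where E2: "E2 = EqE u1 u2"
    unfolding shape_def by (cases E2) auto
  with EqE assms(2) have "map_sterm (\<lambda>_. ()) t1 = map_sterm (\<lambda>_. ()) u1"
    and "map_sterm (\<lambda>_. ()) t2 = map_sterm (\<lambda>_. ()) u2"
    unfolding shape_def by auto
  then have "degenerate_square (teval \<sigma> t1) (teval \<sigma> u1) (teval \<tau> t1) (teval \<tau> u1)"
    and "degenerate_square (teval \<sigma> t2) (teval \<sigma> u2) (teval \<tau> t2) (teval \<tau> u2)"
    by (simp_all add: degenerate_square_teval)
  then show ?thesis
    using assms(3-5) EqE E2 unfolding degenerate_square_def by auto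
qed

lemma square_complete_eqn_noetherian:
  fixes M :: "'c \<Rightarrow> 'c \<Rightarrow> 'c \<Rightarrow> bool"
  assumes "square_complete M"
  shows "eqn_noetherian M"
  unfolding eqn_noetherian_def
proof (intro allI impI)
  fix V and Ss :: "'c sequation set"
  assume "finite V" and vars: "\<forall>e\<in>Ss. evars e \<subseteq> V"
  show "\<exists>S0\<subseteq>Ss. finite S0 \<and> solutions M S0 = solutions M Ss"
  proof (cases "\<exists>e1\<in>Ss. \<exists>e2\<in>Ss. shape e1 = shape e2 \<and> (\<exists>\<tau>. esat M \<tau> e1 \<and> \<not> esat M \<tau> e2)")
    case True
    then obtain e1 e2 \<tau> where e: "e1 \<in> Ss" "e2 \<in> Ss" "shape e1 = shape e2"
      and \<tau>: "esat M \<tau> e1" "\<not> esat M \<tau> e2" by blast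
    have "\<sigma> \<notin> solutions M {e1, e2}" for \<sigma>
    proof
      assume "\<sigma> \<in> solutions M {e1, e2}"
      then have "esat M \<sigma> e1" "esat M \<sigma> e2"
        unfolding solutions_def by simp_all
      with \<tau> show False
        using esat_same_shape[OF assms e(3)] by blast
    qed
    moreover have "solutions M Ss \<subseteq> solutions M {e1, e2}"
      using e(1,2) unfolding solutions_def by blast
    ultimately have "solutions M {e1, e2} = solutions M Ss"
      by blast
    with e(1,2) show ?thesis
      by (intro exI[of _ "{e1, e2}"]) simp
  next
    case False
    then have equiv: "esat M \<sigma> e2"
      if "e1 \<in> Ss" "e2 \<in> Ss" "shape e1 = shape e2" "esat M \<sigma> e1" for e1 e2 \<sigma>
      using that by blast
    have "shape ` Ss \<subseteq> {p. evars p \<subseteq> V}"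
    proof (rule image_subsetI)
      fix e
      assume "e \<in> Ss"
      then show "shape e \<in> {p. evars p \<subseteq> V}"
        using vars by simp
    qed
    then have "finite (shape ` Ss)"
      using finite_shapes[OF \<open>finite V\<close>] finite_subset by blast
    then obtain S0 where S0: "S0 \<subseteq> Ss" "finite S0" "shape ` Ss = shape ` S0"
      using finite_subset_image[OF \<open>finite (shape ` Ss)\<close> subset_refl] by blast
    have "solutions M S0 \<subseteq> solutions M Ss"
    proof
      fix \<sigma>
      assume \<sigma>: "\<sigma> \<in> solutions M S0"
      have "esat M \<sigma> e" if e: "e \<in> Ss" for e
      proof -
        have "shape e \<in> shape ` S0"
          using S0(3) e by blast
        then obtain e0 where "e0 \<in> S0" "shape e0 = shape e"
          by (metis imageE)
        then show ?thesis
          using \<sigma> S0(1) e equiv unfolding solutions_def by blast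
      qed
      then show "\<sigma> \<in> solutions M Ss"
        unfolding solutions_def by blast
    qed
    moreover have "solutions M Ss \<subseteq> solutions M S0"
      using S0(1) unfolding solutions_def by blast
    ultimately have "solutions M S0 = solutions M Ss"
      by (rule subset_antisym)
    with S0(1,2) show ?thesis
      by blast
  qed
qed

theorem theorem5:
  assumes "\<exists>K::'a::semigroup_mult set. is_kernel K \<and> is_subgroup_of_sg K \<and> K = Red"
  shows "eqn_noetherian (power_M :: ('i \<Rightarrow> 'a) \<Rightarrow> ('i \<Rightarrow> 'a) \<Rightarrow> ('i \<Rightarrow> 'a) \<Rightarrow> bool)"
proof -
  have "is_subgroup_of_sg (Red :: 'a set)"
    using assms by blast
  then have "square_complete (power_M :: ('i \<Rightarrow> 'a) \<Rightarrow> ('i \<Rightarrow> 'a) \<Rightarrow> ('i \<Rightarrow> 'a) \<Rightarrow> bool)"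
    unfolding power_M_def by (rule square_complete_pointwise[OF square_complete_mult])
  then show ?thesis
    by (rule square_complete_eqn_noetherian)
qed

end
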